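(* Suppose Assumptions A and C hold. If there is a sequence $(h_j)_{j\in\mathbb N}$ in $\mathbb R^N$ with $h_j\to 0$ such that for every semidefinite face $\mathcal F$ of $\Gamma$ and every $j\in\mathbb N$ $$0\notin \operatorname{Proj}_{\mathcal V(\mathcal F)}\{b(\gamma)+h_j:\gamma\in\mathcal F\},$$ then $\mathrm{Opt}=\mathrm{Opt}_{\mathrm{SDP}}$.
   Context: Fix integers $N\ge 1$, $m_I,m_E\ge 0$, $m:=m_I+m_E\ge 1$; $[a,b]=\{a,\dots,b\}$, $[n]=[1,n]$. For $i\in[0,m]$ let $q_i(x)=x^\top A_ix+2b_i^\top x+c_i$ with $A_i\in\mathbb S^N$, $b_i\in\mathbb R^N$, $c_i\in\mathbb R$. $\mathrm{Opt}:=\inf\{q_0(x): q_i(x)\le 0\ \forall i\in[m_I],\ q_i(x)=0\ \forall i\in[m_I+1,m]\}$. Let $Q_i=\begin{pmatrix}c_i& b_i^\top\\ b_i& A_i\end{pmatrix}$; $\mathrm{Opt}_{\mathrm{SDP}}:=\inf\{\langle Q_0,Y\rangle: Y=\begin{pmatrix}1&x^\top\\ x& X\end{pmatrix}\succeq 0,\ X\in\mathbb S^N,\ \langle Q_i,Y\rangle\le 0\ \forall i\in[m_I],\ \langle Q_i,Y\rangle=0\ \forall i\in[m_I+1,m]\}$. For $\gamma\in\mathbb R^m$: $A(\gamma)=A_0+\sum\gamma_iA_i$, $b(\gamma)=b_0+\sum\gamma_ib_i$; $\Gamma:=\{\gamma: A(\gamma)\succeq0,\ \gamma_i\ge0\ \forall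 i\in[m_I]\}$. Assumption A: the QCQP feasible set is nonempty and some $\gamma^*$ with $\gamma^*_i\ge0$ ($i\in[m_I]$) has $A(\gamma^* )\succ0$. Assumption C: $\Gamma$ is a polyhedron. A nonempty face $\mathcal F$ of $\Gamma$ is semidefinite if no $\gamma\in\mathcal F$ has $A(\gamma)\succ0$; $\mathcal V(\mathcal F):=\{v\in\mathbb R^N: A(\gamma)v=0\ \forall\gamma\in\mathcal F\}$; $\operatorname{Proj}_V$ is orthogonal projection onto subspace $V$. *)

theory Defs
  imports "HOL-Analysis.Analysis"
begin

definition sym_mat :: "real^'k^'k \<Rightarrow> bool" where
  "sym_mat M \<longleftrightarrow> transpose M = M"

definition psd :: "real^'k^'k \<Rightarrow> bool" where
  "psd M \<longleftrightarrow> sym_mat M \<and> (\<forall>v. 0 \<le> v \<bullet> (M *v v))"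

definition pd :: "real^'k^'k \<Rightarrow> bool" where
  "pd M \<longleftrightarrow> sym_mat M \<and> (\<forall>v. v \<noteq> 0 \<longrightarrow> 0 < v \<bullet> (M *v v))"

(* block matrix ( c  b^T ; b  A ) of size (N+1); index None plays the role of index 0 *)
definition blk :: "real \<Rightarrow> real^'n \<Rightarrow> real^'n^'n \<Rightarrow> real^('n option)^('n option)" where
  "blk c b A = (\<chi> i j. case (i, j) of
       (None, None) \<Rightarrow> c
     | (None, Some l) \<Rightarrow> b $ l
     | (Some k, None) \<Rightarrow> b $ k
     | (Some k, Some l) \<Rightarrow> A $ k $ l)"

definition frob :: "real^'k^'k \<Rightarrow> real^'k^'k \<Rightarrow> real" where
  "frob Q Y = (\<Sum>i\<in>UNIV. \<Sum>j\<in>UNIV. Q $ i $ j * Y $ i $ j)"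

definition qf :: "real^'n^'n \<Rightarrow> real^'n \<Rightarrow> real \<Rightarrow> real^'n \<Rightarrow> real" where
  "qf A b c x = x \<bullet> (A *v x) + 2 * (b \<bullet> x) + c"

(* Constraint indices are the elements of the finite type 'm (so m = CARD('m));
   I is the set of inequality indices [m_I], the remaining ones are equalities. *)
definition qcqp_feas ::
  "('m::finite) set \<Rightarrow> ('m \<Rightarrow> real^'n^'n) \<Rightarrow> ('m \<Rightarrow> real^'n) \<Rightarrow> ('m \<Rightarrow> real) \<Rightarrow> (real^'n) set" where
  "qcqp_feas I A b c = {x. (\<forall>i\<in>I. qf (A i) (b i) (c i) x \<le> 0) \<and> (\<forall>i. i \<notin> I \<longrightarrow> qf (A i) (b i) (c i) x = 0)}"

definition Opt ::
  "real^'n^'n \<Rightarrow> real^'n \<Rightarrow> real \<Rightarrow>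
   ('m::finite) set \<Rightarrow> ('m \<Rightarrow> real^'n^'n) \<Rightarrow> ('m \<Rightarrow> real^'n) \<Rightarrow> ('m \<Rightarrow> real) \<Rightarrow> ereal" where
  "Opt A0 b0 c0 I A b c = (INF x\<in>qcqp_feas I A b c. ereal (qf A0 b0 c0 x))"

definition sdp_feas ::
  "('m::finite) set \<Rightarrow> ('m \<Rightarrow> real^'n^'n) \<Rightarrow> ('m \<Rightarrow> real^'n) \<Rightarrow> ('m \<Rightarrow> real) \<Rightarrow> (real^('n option)^('n option)) set" where
  "sdp_feas I A b c = {Y. \<exists>x X. Y = blk 1 x X \<and> sym_mat X \<and> psd Y \<and>
      (\<forall>i\<in>I. frob (blk (c i) (b i) (A i)) Y \<le> 0) \<and>
      (\<forall>i. i \<notin> I \<longrightarrow> frob (blk (c i) (b i) (A i)) Y = 0)}"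

definition Opt_SDP ::
  "real^'n^'n \<Rightarrow> real^'n \<Rightarrow> real \<Rightarrow>
   ('m::finite) set \<Rightarrow> ('m \<Rightarrow> real^'n^'n) \<Rightarrow> ('m \<Rightarrow> real^'n) \<Rightarrow> ('m \<Rightarrow> real) \<Rightarrow> ereal" where
  "Opt_SDP A0 b0 c0 I A b c = (INF Y\<in>sdp_feas I A b c. ereal (frob (blk c0 b0 A0) Y))"

definition Agam :: "real^'n^'n \<Rightarrow> ('m::finite \<Rightarrow> real^'n^'n) \<Rightarrow> real^'m \<Rightarrow> real^'n^'n" where
  "Agam A0 A g = A0 + (\<Sum>i\<in>UNIV. (g $ i) *\<^sub>R A i)"

definition bgam :: "real^'n \<Rightarrow> ('m::finite \<Rightarrow> real^'n) \<Rightarrow> real^'m \<Rightarrow> real^'n" where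
  "bgam b0 b g = b0 + (\<Sum>i\<in>UNIV. (g $ i) *\<^sub>R b i)"

definition Gam :: "real^'n^'n \<Rightarrow> ('m::finite \<Rightarrow> real^'n^'n) \<Rightarrow> 'm set \<Rightarrow> (real^'m) set" where
  "Gam A0 A I = {g. psd (Agam A0 A g) \<and> (\<forall>i\<in>I. 0 \<le> g $ i)}"

definition semidef_face :: "real^'n^'n \<Rightarrow> ('m::finite \<Rightarrow> real^'n^'n) \<Rightarrow> 'm set \<Rightarrow> (real^'m) set \<Rightarrow> bool" where
  "semidef_face A0 A I F \<longleftrightarrow> F \<noteq> {} \<and> F face_of Gam A0 A I \<and> (\<forall>g\<in>F. \<not> pd (Agam A0 A g))"

definition Vsp :: "real^'n^'n \<Rightarrow> ('m::finite \<Rightarrow> real^'n^'n) \<Rightarrow> (real^'m) set \<Rightarrow> (real^'n) set" where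
  "Vsp A0 A F = {v. \<forall>g\<in>F. Agam A0 A g *v v = 0}"

definition proj :: "('a::real_inner) set \<Rightarrow> 'a \<Rightarrow> 'a" where
  "proj V x = (THE p. p \<in> V \<and> (\<forall>v\<in>V. (x - p) \<bullet> v = 0))"

end

theory Submission
  imports Defs
begin

(* Weak duality gives Opt_SDP \<le> Opt: a feasible x lifts to Y = (1 x\<^sup>T; x x x\<^sup>T).  For the converse
   perturb b\<^sub>0 to b\<^sub>0 + h\<^sub>j.  By Minkowski--Weyl \<Gamma> = conv T + cone U with T, U finite, so the dual
   envelope sup\<^sub>\<gamma>\<^sub>\<in>\<^sub>\<Gamma> L(\<gamma>, x) is finite exactly on D = {x. u\<^sup>T q(x) \<le> 0 for u \<in> U}, where it equals
   \<phi>(x) = max\<^sub>t\<^sub>\<in>\<^sub>T L(t, x).  It bounds the objective at feasible points of the QCQP and of the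
   relaxation, and it is coercive because A is positive definite at the Slater point, so it attains
   its minimum on D at some x\<^sub>h.
   If the face F of \<Gamma> on which L(\<cdot>, x\<^sub>h) is maximal were semidefinite, separating 0 from
   Proj\<^sub>V\<^sub>(\<^sub>F\<^sub>) b(F) would give a direction in V(F) along which \<phi> strictly decreases.  Hence F
   contains some \<gamma> with A(\<gamma>) \<succ> 0; moving \<gamma> along the coordinate axes shows that x\<^sub>h is feasible
   with complementary slackness, so q\<^sub>0(x\<^sub>h) = \<phi>(x\<^sub>h) is below the perturbed relaxation value.
   These points stay bounded, and h\<^sub>j \<rightarrow> 0 yields Opt \<le> Opt_SDP. *)

section \<open>Symmetric and semidefinite matrices\<close>

lemma sym_mat_inner_commute:
  assumes "sym_mat M" shows "v \<bullet> (M *v w) = w \<bullet> (M *v v)"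
proof -
  have "v \<bullet> (M *v w) = (v v* M) \<bullet> w" by (simp add: dot_lmul_matrix)
  also have "v v* M = transpose M *v v" by (simp add: transpose_matrix_vector)
  also have "transpose M = M" using assms by (simp add: sym_mat_def)
  finally show ?thesis by (simp add: inner_commute)
qed

lemma sym_mat_zero: "sym_mat 0"
  by (simp add: sym_mat_def transpose_def vec_eq_iff)

lemma sym_mat_add: "sym_mat M \<Longrightarrow> sym_mat N \<Longrightarrow> sym_mat (M + N)"
  by (simp add: sym_mat_def transpose_def vec_eq_iff)

lemma sym_mat_diff: "sym_mat M \<Longrightarrow> sym_mat N \<Longrightarrow> sym_mat (M - N)"
  by (simp add: sym_mat_def transpose_def vec_eq_iff)

lemma sym_mat_scaleR: "sym_mat M \<Longrightarrow> sym_mat (r *\<^sub>R M)"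
  by (simp add: sym_mat_def transpose_def vec_eq_iff)

lemma sym_mat_sum: "(\<And>i. i \<in> S \<Longrightarrow> sym_mat (M i)) \<Longrightarrow> sym_mat (\<Sum>i\<in>S. M i)"
  by (induction S rule: infinite_finite_induct) (auto simp: sym_mat_zero sym_mat_add)

lemma quad_form_shift:
  assumes "sym_mat M"
  shows "(x + t *\<^sub>R w) \<bullet> (M *v (x + t *\<^sub>R w)) = x \<bullet> (M *v x) + 2*t*(w \<bullet> (M *v x)) + t^2*(w \<bullet> (M *v w))"
  using sym_mat_inner_commute[OF assms, of x w]
  by (simp add: matrix_vector_right_distrib matrix_vector_mult_scaleR inner_add_left inner_add_right
      algebra_simps power2_eq_square)

definition outer :: "real^'n \<Rightarrow> real^'n \<Rightarrow> real^'n^'n" where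
  "outer x y = (\<chi> k l. x $ k * y $ l)"

lemma outer_mult_vec: "outer w w *v z = (w \<bullet> z) *\<^sub>R w"
  by (simp add: outer_def matrix_vector_mult_def vec_eq_iff inner_vec_def sum_distrib_left sum_distrib_right algebra_simps)

lemma sym_mat_outer: "sym_mat (outer w w)"
  by (simp add: sym_mat_def outer_def transpose_def vec_eq_iff mult.commute)

lemma frob_outer: "frob M (outer w w) = w \<bullet> (M *v w)"
  by (simp add: frob_def outer_def inner_vec_def matrix_vector_mult_def sum_distrib_left algebra_simps)

lemma frob_zero_right: "frob M 0 = 0"
  by (simp add: frob_def)

lemma frob_diff_right: "frob M (P - Q) = frob M P - frob M Q"
  by (simp add: frob_def algebra_simps sum_subtractf)

lemma frob_add_left: "frob (M + N) P = frob M P + frob N P"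
  by (simp add: frob_def algebra_simps sum.distrib)

lemma frob_scaleR_left: "frob (r *\<^sub>R M) P = r * frob M P"
  by (simp add: frob_def sum_distrib_left algebra_simps)

lemma frob_zero_left: "frob 0 P = 0"
  by (simp add: frob_def)

lemma frob_sum_left: "frob (\<Sum>i\<in>S. g i *\<^sub>R M i) P = (\<Sum>i\<in>S. g i * frob (M i) P)"
  by (induction S rule: infinite_finite_induct) (auto simp: frob_add_left frob_scaleR_left frob_zero_left)

lemma pd_imp_psd: "pd M \<Longrightarrow> psd M"
  unfolding pd_def psd_def by (metis inner_zero_left order_le_less)

lemma psd_quad_form_eq_0_imp_kernel:
  assumes P: "psd P" and z: "v \<bullet> (P *v v) = 0"
  shows "P *v v = 0"
proof -
  have sP: "sym_mat P" using P by (simp add: psd_def)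
  define w where "w = P *v v"
  define k where "k = w \<bullet> (P *v w)"
  have k0: "0 \<le> k" using P by (simp add: psd_def k_def)
  define t where "t = - ((norm w)^2 / (k + 1))"
  have w2: "(norm w)^2 = - t * (k + 1)" using k0 by (simp add: t_def field_simps)
  have "0 \<le> (v + t *\<^sub>R w) \<bullet> (P *v (v + t *\<^sub>R w))" using P by (simp add: psd_def)
  also have "\<dots> = 2*t*(norm w)^2 + t^2*k"
    unfolding quad_form_shift[OF sP] z k_def by (simp add: w_def power2_norm_eq_inner)
  also have "\<dots> = - (t^2 * (k + 2))" unfolding w2 by (simp add: power2_eq_square algebra_simps)
  finally have "t^2 * (k + 2) \<le> 0" by simp
  with k0 have "t = 0" by (simp add: mult_le_0_iff)
  then show ?thesis using w2 by (simp add: w_def)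
qed

text \<open>Subtracting the rank-one matrix \<open>w w\<^sup>T\<close> with \<open>w = P v / \<surd>(v\<^sup>T P v)\<close> keeps \<open>P\<close> positive
  semidefinite (Cauchy--Schwarz for the form of \<open>P\<close>) and adds \<open>v\<close> to its kernel.\<close>
lemma psd_peel_rank_one:
  assumes P: "psd P" and v: "P *v v \<noteq> 0"
  obtains w where "psd (P - outer w w)" "{z. P *v z = 0} \<subseteq> {z. (P - outer w w) *v z = 0}"
    "(P - outer w w) *v v = 0"
proof -
  have sP: "sym_mat P" using P by (simp add: psd_def)
  define d where "d = v \<bullet> (P *v v)"
  have "d \<noteq> 0" using psd_quad_form_eq_0_imp_kernel[OF P] v d_def by metis
  moreover have "d \<ge> 0" using P by (simp add: psd_def d_def)
  ultimately have d: "d > 0" by simp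
  define w where "w = (1 / sqrt d) *\<^sub>R (P *v v)"
  have wz: "w \<bullet> z = (z \<bullet> (P *v v)) / sqrt d" for z
    by (simp add: w_def inner_commute)
  have P'z: "(P - outer w w) *v z = P *v z - (w \<bullet> z) *\<^sub>R w" for z
    by (simp add: matrix_vector_mult_diff_rdistrib outer_mult_vec)
  have "psd (P - outer w w)"
    unfolding psd_def
  proof (intro conjI allI)
    show "sym_mat (P - outer w w)" by (intro sym_mat_diff sP sym_mat_outer)
    fix z
    define a where "a = z \<bullet> (P *v v)"
    have avz: "v \<bullet> (P *v z) = a" using sym_mat_inner_commute[OF sP] a_def by simp
    have "0 \<le> (z + (- a/d) *\<^sub>R v) \<bullet> (P *v (z + (- a/d) *\<^sub>R v))"
      using P by (simp add: psd_def)
    also have "\<dots> = z \<bullet> (P *v z) - a^2/d"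
      unfolding quad_form_shift[OF sP] avz d_def[symmetric] using d
      by (simp add: field_simps power2_eq_square)
    also have "\<dots> = z \<bullet> ((P - outer w w) *v z)"
      using d by (simp add: P'z inner_diff_right wz a_def[symmetric] power2_eq_square
          real_sqrt_mult[symmetric] inner_commute[of z w])
    finally show "0 \<le> z \<bullet> ((P - outer w w) *v z)" .
  qed
  moreover have "{z. P *v z = 0} \<subseteq> {z. (P - outer w w) *v z = 0}"
    using sym_mat_inner_commute[OF sP, of _ v] by (auto simp: P'z wz)
  moreover have "(P - outer w w) *v v = 0"
  proof -
    have "w \<bullet> v = sqrt d"
      using d by (simp add: wz d_def real_div_sqrt)
    then show ?thesis
      unfolding P'z using d by (simp add: w_def)
  qed
  ultimately show ?thesis using that by blast
qed

text \<open>Induction on the codimension of the kernel of \<open>P\<close>, peeling off rank-one summands.\<close>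
lemma frob_psd_nonneg:
  fixes M P :: "real^'n^'n"
  assumes M: "psd M" and P: "psd P"
  shows "0 \<le> frob M P"
  using P
proof (induction "DIM(real^'n) - dim {z. P *v z = 0}" arbitrary: P rule: less_induct)
  case less
  show ?case
  proof (cases "\<forall>v. P *v v = 0")
    case True
    then have "P = 0" by (metis matrix_eq matrix_vector_mult_0)
    then show ?thesis by (simp add: frob_zero_right)
  next
    case False
    then obtain v where v: "P *v v \<noteq> 0" by blast
    obtain w where psd': "psd (P - outer w w)"
      and sub: "{z. P *v z = 0} \<subseteq> {z. (P - outer w w) *v z = 0}"
      and vin: "(P - outer w w) *v v = 0"
      using psd_peel_rank_one[OF less.prems v] by blast
    have kernel: "subspace {z. Q *v z = (0::real^'n)}" for Q :: "real^'n^'n"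
      by (rule linear_subspace_kernel) (simp add: matrix_vector_mul_linear)
    have "span {z. P *v z = 0} \<subset> span {z. (P - outer w w) *v z = 0}"
      using sub vin v by (auto simp: span_eq_iff[THEN iffD2, OF kernel])
    then have "dim {z. P *v z = 0} < dim {z. (P - outer w w) *v z = 0}" by (rule dim_psubset)
    moreover have "dim {z. (P - outer w w) *v z = 0} \<le> DIM(real^'n)" by (rule dim_subset_UNIV)
    ultimately have "0 \<le> frob M (P - outer w w)" using less.hyps psd' by simp
    moreover have "0 \<le> w \<bullet> (M *v w)" using M by (simp add: psd_def)
    ultimately show ?thesis by (simp add: frob_diff_right frob_outer)
  qed
qed

lemma pd_quad_form_coercive:
  fixes M :: "real^'n^'n"
  assumes "pd M"
  obtains l where "l > 0" "\<And>v. l * (norm v)^2 \<le> v \<bullet> (M *v v)"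
proof -
  have cont: "continuous_on (sphere 0 1) (\<lambda>v::real^'n. v \<bullet> (M *v v))"
    by (intro continuous_intros linear_continuous_on matrix_vector_mul_linear bounded_linear_inner_right
        linear_linear[THEN iffD1])
  have "sphere (0::real^'n) 1 \<noteq> {}" by (simp add: sphere_eq_empty)
  then obtain u where u: "u \<in> sphere 0 1" and umin: "\<forall>y\<in>sphere 0 1. u \<bullet> (M *v u) \<le> y \<bullet> (M *v y)"
    using continuous_attains_inf[OF compact_sphere _ cont] by blast
  have "u \<noteq> 0" using u by auto
  then have "0 < u \<bullet> (M *v u)" using assms by (simp add: pd_def)
  moreover have "u \<bullet> (M *v u) * (norm v)^2 \<le> v \<bullet> (M *v v)" for v
  proof (cases "v = 0")
    case False
    define y where "y = (1 / norm v) *\<^sub>R v"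
    have "y \<in> sphere 0 1" using False by (simp add: y_def)
    then have "u \<bullet> (M *v u) \<le> y \<bullet> (M *v y)" using umin by blast
    also have "y \<bullet> (M *v y) = (v \<bullet> (M *v v)) / (norm v)^2"
      by (simp add: y_def matrix_vector_mult_scaleR power2_eq_square)
    finally show ?thesis using False by (simp add: field_simps)
  qed simp
  ultimately show ?thesis using that by blast
qed

lemma pd_add_small:
  fixes M N :: "real^'n^'n"
  assumes "pd M" "sym_mat N"
  obtains e where "e > 0" "\<And>s. \<bar>s\<bar> < e \<Longrightarrow> pd (M + s *\<^sub>R N)"
proof -
  obtain l where l: "l > 0" "\<And>v. l * (norm v)^2 \<le> v \<bullet> (M *v v)"
    using pd_quad_form_coercive[OF assms(1)] by blast
  obtain B where B: "B > 0" "\<And>x. norm (N *v x) \<le> B * norm x"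
    using linear_bounded_pos[OF matrix_vector_mul_linear] by blast
  have "pd (M + s *\<^sub>R N)" if s: "\<bar>s\<bar> < l / B" for s
    unfolding pd_def
  proof (intro conjI allI impI)
    show "sym_mat (M + s *\<^sub>R N)" using assms by (intro sym_mat_add sym_mat_scaleR) (auto simp: pd_def)
    fix v :: "real^'n" assume "v \<noteq> 0"
    then have nv: "(norm v)^2 > 0" by simp
    have "\<bar>v \<bullet> (N *v v)\<bar> \<le> norm v * (B * norm v)"
      by (intro order_trans[OF Cauchy_Schwarz_ineq2] mult_left_mono B(2)) auto
    then have "\<bar>s * (v \<bullet> (N *v v))\<bar> \<le> \<bar>s\<bar> * (B * (norm v)^2)"
      unfolding abs_mult by (intro mult_left_mono) (auto simp: power2_eq_square algebra_simps)
    also have "\<dots> < (l / B) * (B * (norm v)^2)"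
      by (intro mult_strict_right_mono s) (use B nv in \<open>auto simp: power2_eq_square\<close>)
    also have "\<dots> = l * (norm v)^2" using B by simp
    finally have "0 < v \<bullet> (M *v v) + s * (v \<bullet> (N *v v))" using l(2)[of v] by linarith
    then show "0 < v \<bullet> ((M + s *\<^sub>R N) *v v)"
      by (simp add: matrix_vector_mult_add_rdistrib scaleR_matrix_vector_assoc[symmetric] inner_add_right)
  qed
  then show ?thesis using that l B by (metis divide_pos_pos)
qed

section \<open>Quadratic functions\<close>

lemma qf_add: "qf (M + N) (\<beta> + \<beta>') (\<kappa> + \<kappa>') x = qf M \<beta> \<kappa> x + qf N \<beta>' \<kappa>' x"
  by (simp add: qf_def matrix_vector_mult_add_rdistrib inner_add_left inner_add_right algebra_simps)

lemma qf_scaleR: "qf (r *\<^sub>R M) (r *\<^sub>R \<beta>) (r * \<kappa>) x = r * qf M \<beta> \<kappa> x"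
  by (simp add: qf_def scaleR_matrix_vector_assoc[symmetric] algebra_simps)

lemma qf_sum:
  "qf (\<Sum>i\<in>S. g i *\<^sub>R M i) (\<Sum>i\<in>S. g i *\<^sub>R \<beta> i) (\<Sum>i\<in>S. g i * \<kappa> i) x
     = (\<Sum>i\<in>S. g i * qf (M i) (\<beta> i) (\<kappa> i) x)"
  by (induction S rule: infinite_finite_induct) (auto simp: qf_add qf_scaleR, simp_all add: qf_def)

lemma qf_add_linear: "qf M (\<beta> + h) \<kappa> x = qf M \<beta> \<kappa> x + 2 * (h \<bullet> x)"
  by (simp add: qf_def inner_add_left algebra_simps)

lemma qf_shift:
  assumes "sym_mat M"
  shows "qf M \<beta> \<kappa> (x + t *\<^sub>R w) = qf M \<beta> \<kappa> x + 2*t*(w \<bullet> (M *v x + \<beta>)) + t^2*(w \<bullet> (M *v w))"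
  using sym_mat_inner_commute[OF assms, of x w] unfolding qf_def
  by (simp add: matrix_vector_right_distrib matrix_vector_mult_scaleR inner_add_left inner_add_right
      algebra_simps power2_eq_square inner_commute[of \<beta>])

lemma qf_shift_kernel:
  assumes "sym_mat M" "M *v w = 0"
  shows "qf M \<beta> \<kappa> (x + t *\<^sub>R w) = qf M \<beta> \<kappa> x + 2*t*(w \<bullet> \<beta>)"
proof -
  have "w \<bullet> (M *v x) = 0" using sym_mat_inner_commute[OF assms(1), of w x] assms(2) by simp
  then show ?thesis using assms by (simp add: qf_shift inner_add_right)
qed

lemma continuous_on_qf: "continuous_on S (qf M \<beta> \<kappa>)"
  unfolding qf_def
  by (intro continuous_intros linear_continuous_on matrix_vector_mul_linear linear_linear[THEN iffD1])

lemma qf_sublevel_bounded: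
  assumes "pd M"
  obtains R where "\<And>\<beta> x. norm \<beta> \<le> B \<Longrightarrow> qf M \<beta> \<kappa> x \<le> C \<Longrightarrow> norm x \<le> R"
proof -
  obtain l where l: "l > 0" "\<And>v. l * (norm v)^2 \<le> v \<bullet> (M *v v)"
    using pd_quad_form_coercive[OF assms] by blast
  have "norm x \<le> max 1 ((\<bar>C - \<kappa>\<bar> + 2 * B) / l)" if \<beta>: "norm \<beta> \<le> B" and x: "qf M \<beta> \<kappa> x \<le> C" for \<beta> x
  proof (cases "norm x \<le> 1")
    case False
    have "- (norm \<beta> * norm x) \<le> \<beta> \<bullet> x" using Cauchy_Schwarz_ineq2[of \<beta> x] by linarith
    moreover have "norm \<beta> * norm x \<le> B * norm x" using \<beta> by (simp add: mult_right_mono)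
    moreover have "\<bar>C - \<kappa>\<bar> \<le> \<bar>C - \<kappa>\<bar> * norm x"
      using mult_left_mono[of 1 "norm x" "\<bar>C - \<kappa>\<bar>"] False by simp
    ultimately have "(l * norm x) * norm x \<le> (\<bar>C - \<kappa>\<bar> + 2 * B) * norm x"
      using l(2)[of x] x abs_ge_self[of "C - \<kappa>"] unfolding qf_def distrib_right power2_eq_square mult.assoc
      by linarith
    moreover have "0 < norm x" using False by linarith
    ultimately have "l * norm x \<le> \<bar>C - \<kappa>\<bar> + 2 * B" by (rule mult_right_le_imp_le)
    then have "norm x \<le> (\<bar>C - \<kappa>\<bar> + 2 * B) / l"
      using l(1) by (simp add: pos_le_divide_eq mult.commute[of l])
    then show ?thesis by simp
  qed simp
  then show ?thesis using that by blast
qed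

section \<open>The parametrised data \<open>A(\<gamma>)\<close>, \<open>b(\<gamma>)\<close> and the constraint values\<close>

definition Alin :: "('m::finite \<Rightarrow> real^'n^'n) \<Rightarrow> real^'m \<Rightarrow> real^'n^'n" where
  "Alin A g = (\<Sum>i\<in>UNIV. (g $ i) *\<^sub>R A i)"

definition blin :: "('m::finite \<Rightarrow> real^'n) \<Rightarrow> real^'m \<Rightarrow> real^'n" where
  "blin b g = (\<Sum>i\<in>UNIV. (g $ i) *\<^sub>R b i)"

definition clin :: "('m::finite \<Rightarrow> real) \<Rightarrow> real^'m \<Rightarrow> real" where
  "clin c g = (\<Sum>i\<in>UNIV. (g $ i) * c i)"

definition qvals :: "('m::finite \<Rightarrow> real^'n^'n) \<Rightarrow> ('m \<Rightarrow> real^'n) \<Rightarrow> ('m \<Rightarrow> real) \<Rightarrow> real^'n \<Rightarrow> real^'m" where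
  "qvals A b c x = (\<chi> i. qf (A i) (b i) (c i) x)"

lemma Agam_eq: "Agam A0 A g = A0 + Alin A g"
  by (simp add: Agam_def Alin_def)

lemma bgam_eq: "bgam b0 b g = b0 + blin b g"
  by (simp add: bgam_def blin_def)

lemma bgam_add_const: "bgam (b0 + h) b g = bgam b0 b g + h"
  by (simp add: bgam_def algebra_simps)

lemma Alin_add: "Alin A (g + u) = Alin A g + Alin A u"
  by (simp add: Alin_def scaleR_add_left sum.distrib)

lemma Alin_scaleR: "Alin A (r *\<^sub>R u) = r *\<^sub>R Alin A u"
  by (simp add: Alin_def scaleR_sum_right)

lemma Alin_axis: "Alin A (axis i 1) = A i"
proof -
  have "Alin A (axis i 1) = (\<Sum>j\<in>UNIV. (if j = i then A j else 0))"
    unfolding Alin_def by (intro sum.cong) (auto simp: axis_def)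
  then show ?thesis by simp
qed

lemma linear_blin: "linear (blin b)"
  by (rule linearI) (simp_all add: blin_def scaleR_add_left sum.distrib scaleR_sum_right)

lemma sym_mat_Alin: "(\<And>i. sym_mat (A i)) \<Longrightarrow> sym_mat (Alin A g)"
  unfolding Alin_def by (intro sym_mat_sum sym_mat_scaleR) auto

lemma sym_mat_Agam: "sym_mat A0 \<Longrightarrow> (\<And>i. sym_mat (A i)) \<Longrightarrow> sym_mat (Agam A0 A g)"
  by (simp add: Agam_eq sym_mat_Alin sym_mat_add)

lemma qf_lin: "qf (Alin A u) (blin b u) (clin c u) x = u \<bullet> qvals A b c x"
  unfolding Alin_def blin_def clin_def qf_sum by (simp add: inner_vec_def qvals_def)

lemma qf_gam:
  "qf (Agam A0 A g) (bgam b0 b g) (c0 + clin c g) x = qf A0 b0 c0 x + g \<bullet> qvals A b c x"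
  unfolding Agam_eq bgam_eq qf_add qf_lin ..

section \<open>Block matrices and the semidefinite relaxation\<close>

lemma sum_UNIV_option: "(\<Sum>i\<in>(UNIV :: ('a::finite) option set). f i) = f None + (\<Sum>k\<in>UNIV. f (Some k))"
  by (simp add: UNIV_option_conv sum.reindex)

definition ztail :: "real^('n option) \<Rightarrow> real^'n" where
  "ztail z = (\<chi> k. z $ Some k)"

lemma frob_blk: "frob (blk c b A) (blk c' x X) = c * c' + 2 * (b \<bullet> x) + frob A X"
  unfolding frob_def sum_UNIV_option by (simp add: blk_def inner_vec_def sum.distrib)

lemma quad_form_blk:
  "z \<bullet> (blk c b A *v z) = c * (z $ None)^2 + 2 * (z $ None) * (b \<bullet> ztail z) + ztail z \<bullet> (A *v ztail z)"
  by (simp add: blk_def inner_vec_def matrix_vector_mult_def sum_UNIV_option ztail_def sum.distrib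
      sum_distrib_left sum_distrib_right algebra_simps power2_eq_square)

lemma sym_mat_blk: "sym_mat A \<Longrightarrow> sym_mat (blk c b A)"
  unfolding sym_mat_def blk_def transpose_def
  by (auto simp: vec_eq_iff split: option.splits)

lemma psd_blk_imp_psd_Schur:
  fixes x :: "real^'n"
  assumes "psd (blk 1 x X)" "sym_mat X"
  shows "psd (X - outer x x)"
  unfolding psd_def
proof (intro conjI allI)
  show "sym_mat (X - outer x x)" using assms by (intro sym_mat_diff sym_mat_outer)
  fix v
  define z :: "real^('n option)" where "z = (\<chi> i. case i of None \<Rightarrow> - (x \<bullet> v) | Some k \<Rightarrow> v $ k)"
  have z: "ztail z = v" "z $ None = - (x \<bullet> v)" by (simp_all add: z_def ztail_def vec_eq_iff)
  have "0 \<le> z \<bullet> (blk 1 x X *v z)" using assms by (simp add: psd_def)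
  also have "\<dots> = v \<bullet> (X *v v) - (x \<bullet> v)^2"
    unfolding quad_form_blk z by (simp add: power2_eq_square)
  also have "\<dots> = v \<bullet> ((X - outer x x) *v v)"
    by (simp add: matrix_vector_mult_diff_rdistrib outer_mult_vec inner_diff_right power2_eq_square
        inner_commute)
  finally show "0 \<le> v \<bullet> ((X - outer x x) *v v)" .
qed

lemma psd_blk_outer: "psd (blk 1 (x :: real^'n) (outer x x))"
  unfolding psd_def
proof (intro conjI allI)
  show "sym_mat (blk 1 x (outer x x))" by (intro sym_mat_blk sym_mat_outer)
  fix z :: "real^('n option)"
  have "z \<bullet> (blk 1 x (outer x x) *v z) = (z $ None + x \<bullet> ztail z)^2"
    unfolding quad_form_blk by (simp add: outer_mult_vec power2_eq_square algebra_simps inner_commute)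
  then show "0 \<le> z \<bullet> (blk 1 x (outer x x) *v z)" by simp
qed

lemma frob_blk_outer: "frob (blk c b A) (blk 1 x (outer x x)) = qf A b c x"
  by (simp add: frob_blk frob_outer qf_def)

definition sdp_point ::
  "('m::finite) set \<Rightarrow> ('m \<Rightarrow> real^'n^'n) \<Rightarrow> ('m \<Rightarrow> real^'n) \<Rightarrow> ('m \<Rightarrow> real) \<Rightarrow> real^'n \<Rightarrow> real^'n^'n \<Rightarrow> bool" where
  "sdp_point I A b c x X \<longleftrightarrow> sym_mat X \<and> psd (blk 1 x X) \<and>
      (\<forall>i\<in>I. frob (blk (c i) (b i) (A i)) (blk 1 x X) \<le> 0) \<and>
      (\<forall>i. i \<notin> I \<longrightarrow> frob (blk (c i) (b i) (A i)) (blk 1 x X) = 0)"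

lemma sdp_feas_eq: "sdp_feas I A b c = {blk 1 x X | x X. sdp_point I A b c x X}"
  by (auto simp: sdp_feas_def sdp_point_def)

section \<open>Orthogonal projection onto a subspace\<close>

lemma proj_unique:
  fixes V :: "'a::euclidean_space set"
  assumes "subspace V" "p \<in> V" "\<forall>w\<in>V. (x - p) \<bullet> w = 0"
  shows "proj V x = p"
proof -
  have uniq: "q = p" if "q \<in> V" "\<forall>w\<in>V. (x - q) \<bullet> w = 0" for q
  proof -
    have "q - p \<in> V" using that assms by (simp add: subspace_diff)
    have "(q - p) \<bullet> (q - p) = (x - p) \<bullet> (q - p) - (x - q) \<bullet> (q - p)"
      by (simp add: algebra_simps inner_diff_left)
    also have "\<dots> = 0" using that assms \<open>q - p \<in> V\<close> by simp
    finally show ?thesis by simp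
  qed
  show ?thesis unfolding proj_def
    by (rule the_equality) (use assms uniq in blast)+
qed

lemma proj_in_and_orthogonal:
  fixes V :: "'a::euclidean_space set"
  assumes "subspace V"
  shows "proj V x \<in> V" "\<forall>w\<in>V. (x - proj V x) \<bullet> w = 0"
proof -
  obtain y z where yz: "y \<in> span V" "\<And>w. w \<in> span V \<Longrightarrow> orthogonal z w" "x = y + z"
    using orthogonal_subspace_decomp_exists by blast
  have V: "span V = V" using assms by (simp add: span_eq_iff)
  have y: "y \<in> V" "\<forall>w\<in>V. (x - y) \<bullet> w = 0" using yz unfolding V by (auto simp: orthogonal_def)
  then have "proj V x = y" using assms by (intro proj_unique)
  then show "proj V x \<in> V" "\<forall>w\<in>V. (x - proj V x) \<bullet> w = 0"
    using y by auto
qed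

lemma linear_proj:
  fixes V :: "'a::euclidean_space set"
  assumes "subspace V"
  shows "linear (proj V)"
proof (rule linearI)
  note P = proj_in_and_orthogonal[OF assms]
  show "proj V (x + y) = proj V x + proj V y" for x y
    using P[of x] P[of y] assms
    by (intro proj_unique) (auto simp: subspace_add inner_diff_left inner_add_left algebra_simps)
  show "proj V (r *\<^sub>R x) = r *\<^sub>R proj V x" for r x
    using P[of x] assms
    by (intro proj_unique) (auto simp: subspace_scale scaleR_diff_right[symmetric])
qed

lemma proj_inner_commute:
  fixes V :: "'a::euclidean_space set"
  assumes "subspace V"
  shows "proj V a \<bullet> y = a \<bullet> proj V y"
proof -
  note P = proj_in_and_orthogonal[OF assms]
  have "(y - proj V y) \<bullet> proj V a = 0" "(a - proj V a) \<bullet> proj V y = 0"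
    using P[of a] P[of y] by auto
  then have "y \<bullet> proj V a = proj V y \<bullet> proj V a" "a \<bullet> proj V y = proj V a \<bullet> proj V y"
    by (simp_all add: inner_diff_left)
  then show ?thesis by (metis inner_commute)
qed

section \<open>Finitely generated polyhedra\<close>

lemma polyhedron_conic_generators:
  fixes C :: "'a::euclidean_space set"
  assumes poly: "polyhedron C" and conic: "conic C"
  obtains S where "finite S" "S \<subseteq> C" "\<And>z. z \<in> C \<Longrightarrow> \<exists>c. (\<forall>s\<in>S. 0 \<le> c s) \<and> z = (\<Sum>s\<in>S. c s *\<^sub>R s)"
proof -
  have "polytope (C \<inter> cbox (- One) One)"
    unfolding polytope_eq_bounded_polyhedron by (simp add: poly bounded_Int)
  then obtain S where S: "finite S" "C \<inter> cbox (- One) One = convex hull S" by (auto simp: polytope_def)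
  have "S \<subseteq> C" using S(2) hull_subset[of S convex] by blast
  moreover have "\<exists>c. (\<forall>s\<in>S. 0 \<le> c s) \<and> z = (\<Sum>s\<in>S. c s *\<^sub>R s)" if z: "z \<in> C" for z
  proof (cases "z = 0")
    case True
    then show ?thesis by (intro exI[of _ "\<lambda>_. 0"]) simp
  next
    case False
    define z' where "z' = (1 / norm z) *\<^sub>R z"
    have "z' \<in> C" using conic z by (simp add: z'_def conic_def)
    moreover have "norm z' = 1" using False by (simp add: z'_def)
    then have "z' \<in> cbox (- One) One"
      using Basis_le_norm[of _ z'] by (auto simp: mem_box inner_sum_Basis abs_le_iff)
    ultimately have "z' \<in> convex hull S" using S(2) by blast
    then obtain w where w: "\<forall>s\<in>S. 0 \<le> w s" "(\<Sum>s\<in>S. w s *\<^sub>R s) = z'"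
      using convex_hull_finite[OF S(1)] by auto
    have "z = norm z *\<^sub>R z'" using False by (simp add: z'_def)
    also have "\<dots> = (\<Sum>s\<in>S. (norm z * w s) *\<^sub>R s)" by (simp add: w(2)[symmetric] scaleR_sum_right)
    finally show ?thesis using w(1) by (intro exI[of _ "\<lambda>s. norm z * w s"]) auto
  qed
  ultimately show ?thesis using that S(1) by blast
qed

text \<open>Splitting a nonnegative combination of homogenised points \<open>(x, \<tau>)\<close> into the points with
  \<open>\<tau> > 0\<close>, which dehomogenise to \<open>x / \<tau>\<close>, and the directions with \<open>\<tau> = 0\<close>.\<close>
lemma dehomogenize_combination:
  fixes S :: "('a::real_vector \<times> real) set"
  assumes S: "finite S" "\<forall>s\<in>S. 0 \<le> snd s" and c: "\<forall>s\<in>S. 0 \<le> c s"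
    and g: "(g, 1) = (\<Sum>s\<in>S. c s *\<^sub>R s)"
  defines "T \<equiv> (\<lambda>s. (1 / snd s) *\<^sub>R fst s) ` {s\<in>S. 0 < snd s}"
    and "U \<equiv> fst ` {s\<in>S. snd s = 0}"
  shows "\<exists>l m. (\<forall>t\<in>T. 0 \<le> l t) \<and> sum l T = 1 \<and> (\<forall>u\<in>U. 0 \<le> m u) \<and>
           g = (\<Sum>t\<in>T. l t *\<^sub>R t) + (\<Sum>u\<in>U. m u *\<^sub>R u)"
proof -
  define S1 where "S1 = {s\<in>S. 0 < snd s}"
  define S0 where "S0 = {s\<in>S. snd s = 0}"
  define \<phi> where "\<phi> s = (1 / snd s) *\<^sub>R fst s" for s :: "'a \<times> real"
  have fin: "finite S1" "finite S0" using S(1) by (auto simp: S1_def S0_def)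
  have split: "sum f S = sum f S1 + sum f S0" for f :: "'a \<times> real \<Rightarrow> 'x::comm_monoid_add"
    using S by (subst sum.union_disjoint[symmetric]) (auto simp: S1_def S0_def intro!: sum.cong)
  have "(1::real) = (\<Sum>s\<in>S. c s * snd s)" using arg_cong[OF g, of snd] by (simp add: snd_sum)
  then have one: "(\<Sum>s\<in>S1. c s * snd s) = 1" by (simp add: split S0_def)
  have "g = (\<Sum>s\<in>S1. c s *\<^sub>R fst s) + (\<Sum>s\<in>S0. c s *\<^sub>R fst s)"
    using arg_cong[OF g, of fst] by (simp add: fst_sum split)
  also have "(\<Sum>s\<in>S1. c s *\<^sub>R fst s) = (\<Sum>s\<in>S1. (c s * snd s) *\<^sub>R \<phi> s)"
    by (intro sum.cong refl) (auto simp: \<phi>_def S1_def)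
  finally have g': "g = (\<Sum>s\<in>S1. (c s * snd s) *\<^sub>R \<phi> s) + (\<Sum>s\<in>S0. c s *\<^sub>R fst s)" .
  define l where "l t = (\<Sum>s\<in>{s\<in>S1. \<phi> s = t}. c s * snd s)" for t
  define m where "m u = (\<Sum>s\<in>{s\<in>S0. fst s = u}. c s)" for u
  have "sum l T = 1"
    unfolding T_def l_def S1_def[symmetric] \<phi>_def[abs_def, symmetric]
    using sum.image_gen[OF fin(1), of "\<lambda>s. c s * snd s" \<phi>] one by simp
  moreover have "(\<Sum>t\<in>T. l t *\<^sub>R t) = (\<Sum>s\<in>S1. (c s * snd s) *\<^sub>R \<phi> s)"
    unfolding T_def l_def S1_def[symmetric] \<phi>_def[abs_def, symmetric]
    by (subst sum.image_gen[OF fin(1)]) (auto simp: scaleR_sum_left intro!: sum.cong)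
  moreover have "(\<Sum>u\<in>U. m u *\<^sub>R u) = (\<Sum>s\<in>S0. c s *\<^sub>R fst s)"
    unfolding U_def m_def S0_def[symmetric]
    by (subst sum.image_gen[OF fin(2)]) (auto simp: scaleR_sum_left intro!: sum.cong)
  moreover have "\<forall>t\<in>T. 0 \<le> l t" "\<forall>u\<in>U. 0 \<le> m u"
    using c by (auto simp: l_def m_def S1_def S0_def intro!: sum_nonneg)
  ultimately show ?thesis using g' by metis
qed

text \<open>Minkowski--Weyl, via the polyhedral cone \<open>{(x, \<tau>). \<tau> \<ge> 0 \<and> a\<^sub>h \<bullet> x \<le> \<beta>\<^sub>h \<tau>}\<close> homogenising
  \<open>G = {x. a\<^sub>h \<bullet> x \<le> \<beta>\<^sub>h}\<close>.\<close>
lemma polyhedron_Minkowski_Weyl: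
  fixes G :: "'a::euclidean_space set"
  assumes poly: "polyhedron G" and ne: "G \<noteq> {}"
  obtains T U where "finite T" "T \<noteq> {}" "finite U" "T \<subseteq> G"
    "\<And>u g s. u \<in> U \<Longrightarrow> g \<in> G \<Longrightarrow> 0 \<le> s \<Longrightarrow> g + s *\<^sub>R u \<in> G"
    "\<And>g. g \<in> G \<Longrightarrow> \<exists>l m. (\<forall>t\<in>T. 0 \<le> l t) \<and> sum l T = 1 \<and> (\<forall>u\<in>U. 0 \<le> m u) \<and>
        g = (\<Sum>t\<in>T. l t *\<^sub>R t) + (\<Sum>u\<in>U. m u *\<^sub>R u)"
proof -
  obtain F where F: "finite F" "G = \<Inter>F" "\<forall>h\<in>F. \<exists>a b. a \<noteq> 0 \<and> h = {x. a \<bullet> x \<le> b}"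
    using poly unfolding polyhedron_def by blast
  then obtain a \<beta> where "\<And>h. h \<in> F \<Longrightarrow> h = {x. a h \<bullet> x \<le> \<beta> h}" by metis
  then have memG: "x \<in> G \<longleftrightarrow> (\<forall>h\<in>F. a h \<bullet> x \<le> \<beta> h)" for x
    using F(2) by auto
  define C :: "('a \<times> real) set" where "C = {z. 0 \<le> snd z \<and> (\<forall>h\<in>F. a h \<bullet> fst z \<le> \<beta> h * snd z)}"
  have "C = {z. (0, -1) \<bullet> z \<le> 0} \<inter> \<Inter> ((\<lambda>h. {z. (a h, - \<beta> h) \<bullet> z \<le> 0}) ` F)"
    by (auto simp: C_def inner_Pair[of 0 "-1" "fst _" "snd _", simplified] prod.case_eq_if)
  then have "polyhedron C"
    by (auto simp: F(1) polyhedron_halfspace_le intro!: polyhedron_Int polyhedron_Inter)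
  moreover have "conic C"
    by (auto simp: conic_def C_def) (metis mult_left_mono mult.left_commute)
  ultimately obtain S where S: "finite S" "S \<subseteq> C"
      and gen: "\<And>z. z \<in> C \<Longrightarrow> \<exists>c. (\<forall>s\<in>S. 0 \<le> c s) \<and> z = (\<Sum>s\<in>S. c s *\<^sub>R s)"
    using polyhedron_conic_generators by blast
  define T where "T = (\<lambda>s. (1 / snd s) *\<^sub>R fst s) ` {s\<in>S. 0 < snd s}"
  define U where "U = fst ` {s\<in>S. snd s = 0}"
  have decomp: "\<exists>l m. (\<forall>t\<in>T. 0 \<le> l t) \<and> sum l T = 1 \<and> (\<forall>u\<in>U. 0 \<le> m u) \<and>
        g = (\<Sum>t\<in>T. l t *\<^sub>R t) + (\<Sum>u\<in>U. m u *\<^sub>R u)" if "g \<in> G" for g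
  proof -
    have "(g, 1) \<in> C" using that by (simp add: C_def memG)
    then obtain c where "\<forall>s\<in>S. 0 \<le> c s" "(g, 1) = (\<Sum>s\<in>S. c s *\<^sub>R s)" using gen by blast
    then show ?thesis unfolding T_def U_def
      using S by (intro dehomogenize_combination) (auto simp: C_def)
  qed
  have "T \<subseteq> G"
    using S(2) by (auto simp: T_def C_def memG divide_simps mult.commute)
  moreover have "g + s *\<^sub>R u \<in> G" if "u \<in> U" "g \<in> G" "0 \<le> s" for u g s
  proof -
    have "\<forall>h\<in>F. a h \<bullet> u \<le> 0" using that(1) S(2) by (auto simp: U_def C_def)
    then have "s * (a h \<bullet> u) \<le> 0" if "h \<in> F" for h using mult_nonneg_nonpos \<open>0 \<le> s\<close> that by blast
    then show ?thesis using \<open>g \<in> G\<close> unfolding memG by (fastforce simp: inner_add_right)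
  qed
  moreover have "T \<noteq> {}" using decomp ne by fastforce
  moreover have "finite T" "finite U" using S(1) by (auto simp: T_def U_def)
  ultimately show ?thesis using that decomp by blast
qed

section \<open>Separating zero from a finitely generated convex set\<close>

lemma hull_sums_subset_of_recession:
  assumes S: "convex S" "P \<subseteq> S"
    and rec: "\<And>s q \<sigma>. s \<in> S \<Longrightarrow> q \<in> Q \<Longrightarrow> 0 \<le> \<sigma> \<Longrightarrow> s + \<sigma> *\<^sub>R q \<in> S"
  shows "(\<Union>x\<in>convex hull P. \<Union>y\<in>convex_cone hull Q. {x + y}) \<subseteq> S"
proof -
  define R where "R = {d. \<forall>s\<in>S. \<forall>\<sigma>\<ge>0. s + \<sigma> *\<^sub>R d \<in> S}"
  have "conic R"
    unfolding conic_def
  proof (intro allI impI)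
    fix d and c :: real assume "d \<in> R" "0 \<le> c"
    then show "c *\<^sub>R d \<in> R" by (simp add: R_def)
  qed
  moreover have "convex R"
  proof (rule convexI)
    fix x y u w assume "x \<in> R" "y \<in> R" and uw: "0 \<le> u" "0 \<le> w" "u + w = (1::real)"
    have "u *\<^sub>R (s + \<sigma> *\<^sub>R x) + w *\<^sub>R (s + \<sigma> *\<^sub>R y) = (u + w) *\<^sub>R s + \<sigma> *\<^sub>R (u *\<^sub>R x + w *\<^sub>R y)"
      for s \<sigma> by (simp add: algebra_simps)
    then have "s + \<sigma> *\<^sub>R (u *\<^sub>R x + w *\<^sub>R y) = u *\<^sub>R (s + \<sigma> *\<^sub>R x) + w *\<^sub>R (s + \<sigma> *\<^sub>R y)" for s \<sigma>
      using uw(3) by simp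
    then show "u *\<^sub>R x + w *\<^sub>R y \<in> R"
      using \<open>x \<in> R\<close> \<open>y \<in> R\<close> convexD[OF S(1) _ _ uw] unfolding R_def by (simp only: mem_Collect_eq) metis
  qed
  moreover have "0 \<in> R" by (simp add: R_def)
  ultimately have "convex_cone R" unfolding convex_cone_def by blast
  moreover have "Q \<subseteq> R" using rec by (simp add: R_def subset_iff)
  ultimately have "convex_cone hull Q \<subseteq> R" by (simp add: hull_minimal)
  moreover have "convex hull P \<subseteq> S" using S(2,1) by (rule hull_minimal)
  moreover have "x + y \<in> S" if "x \<in> S" "y \<in> R" for x y
    using that(2)[unfolded R_def, THEN CollectD, rule_format, OF that(1), of 1] by simp
  ultimately show ?thesis by blast
qed

lemma nonpos_of_bounded_ray:
  fixes a b K :: real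
  assumes "\<And>s. 0 \<le> s \<Longrightarrow> a + s * b \<le> K"
  shows "b \<le> 0"
proof (rule ccontr)
  assume "\<not> b \<le> 0"
  then have "a + ((\<bar>K - a\<bar> + 1) / b) * b \<le> K" "((\<bar>K - a\<bar> + 1) / b) * b = \<bar>K - a\<bar> + 1"
    using assms[of "(\<bar>K - a\<bar> + 1) / b"] by auto
  then show False by linarith
qed

lemma finite_hull_sums_separation:
  fixes P Q :: "'a::euclidean_space set"
  assumes "finite P" "finite Q" and zero: "0 \<notin> (\<Union>x\<in>convex hull P. \<Union>y\<in>convex_cone hull Q. {x + y})"
  obtains a where "\<And>p. p \<in> P \<Longrightarrow> 0 < a \<bullet> p" "\<And>q. q \<in> Q \<Longrightarrow> 0 \<le> a \<bullet> q"
proof (cases "P = {}")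
  case True
  then show ?thesis using that[of 0] by simp
next
  case False
  then obtain p0 where p0: "p0 \<in> P" by blast
  define W where "W = (\<Union>x\<in>convex hull P. \<Union>y\<in>convex_cone hull Q. {x + y})"
  have "closed W" unfolding W_def
    using assms by (intro compact_closed_sums finite_imp_compact_convex_hull closed_convex_cone_hull)
  moreover have "convex W" unfolding W_def by (intro convex_sums convex_convex_hull convex_convex_cone_hull)
  moreover have "0 \<notin> W" using zero by (simp add: W_def)
  ultimately obtain a \<beta> where "a \<bullet> 0 < \<beta>" and sep: "\<forall>w\<in>W. \<beta> < a \<bullet> w"
    using separating_hyperplane_closed_point by blast
  then have \<beta>: "0 < \<beta>" by simp
  have inW: "p + s *\<^sub>R q \<in> W" if "p \<in> P" "q \<in> Q" "0 \<le> s" for p q s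
  proof -
    have "p \<in> convex hull P" using that(1) by (rule hull_inc)
    moreover have "s *\<^sub>R q \<in> convex_cone hull Q" using that by (intro convex_cone_hull_mul hull_inc)
    ultimately show ?thesis unfolding W_def by blast
  qed
  have inW0: "p \<in> W" if "p \<in> P" for p
    using hull_inc[OF that, of convex] convex_cone_hull_contains_0[of Q] unfolding W_def by force
  show ?thesis
  proof (rule that)
    show "0 < a \<bullet> p" if "p \<in> P" for p using sep inW0[OF that] \<beta> by fastforce
    show "0 \<le> a \<bullet> q" if "q \<in> Q" for q
    proof -
      have "- (a \<bullet> p0) + s * - (a \<bullet> q) \<le> - \<beta>" if "0 \<le> s" for s
        using sep inW[OF p0 \<open>q \<in> Q\<close> that] by (auto simp: inner_add_right)
      then have "- (a \<bullet> q) \<le> 0" by (rule nonpos_of_bounded_ray)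
      then show ?thesis by simp
    qed
  qed
qed

section \<open>The Lagrangian of the QCQP\<close>

locale qcqp_slater =
  fixes A0 :: "real^'n^'n" and A :: "'m::finite \<Rightarrow> real^'n^'n" and b :: "'m \<Rightarrow> real^'n"
    and c :: "'m \<Rightarrow> real" and c0 :: real and I :: "'m set" and gs :: "real^'m"
  assumes sym_A0: "sym_mat A0" and sym_A: "\<And>i. sym_mat (A i)"
    and polyhedron_Gam: "polyhedron (Gam A0 A I)"
    and gs_nonneg: "\<forall>i\<in>I. 0 \<le> gs $ i" and pd_gs: "pd (Agam A0 A gs)"
begin

definition lagr :: "real^'n \<Rightarrow> real^'m \<Rightarrow> real^'n \<Rightarrow> real" where
  "lagr bb g x = qf A0 bb c0 x + g \<bullet> qvals A b c x"

lemma lagr_eq_qf: "lagr bb g x = qf (Agam A0 A g) (bgam bb b g) (c0 + clin c g) x"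
  by (simp add: lagr_def qf_gam)

lemma lagr_add_ray: "lagr bb (g + s *\<^sub>R u) x = lagr bb g x + s * (u \<bullet> qvals A b c x)"
  by (simp add: lagr_def inner_add_left)

lemma continuous_on_lagr: "continuous_on S (lagr bb g)"
  unfolding lagr_eq_qf[abs_def] by (rule continuous_on_qf)

lemma gs_in_Gam: "gs \<in> Gam A0 A I"
  using gs_nonneg pd_gs by (simp add: Gam_def pd_imp_psd)

lemma convex_Gam: "convex (Gam A0 A I)"
  by (rule polyhedron_imp_convex[OF polyhedron_Gam])

lemma lagr_le_qf_if_feasible:
  assumes "x \<in> qcqp_feas I A b c" "g \<in> Gam A0 A I"
  shows "lagr bb g x \<le> qf A0 bb c0 x"
proof -
  have "g $ i * qvals A b c x $ i \<le> 0" for i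
    using assms by (cases "i \<in> I") (auto simp: Gam_def qcqp_feas_def qvals_def mult_nonneg_nonpos)
  then show ?thesis by (simp add: lagr_def inner_vec_def sum_nonpos)
qed

text \<open>Weak duality for the relaxation: \<open>\<langle>Q\<^sub>0 + \<Sum>\<gamma>\<^sub>i Q\<^sub>i, Y\<rangle> = L(\<gamma>, x) + \<langle>A(\<gamma>), X - x x\<^sup>T\<rangle>\<close>,
  and the last term is nonnegative by the Schur complement.\<close>
lemma lagr_le_sdp:
  assumes Y: "sdp_point I A b c x X" and g: "g \<in> Gam A0 A I"
  shows "lagr bb g x \<le> frob (blk c0 bb A0) (blk 1 x X)"
proof -
  define P where "P = X - outer x x"
  have "psd P" using Y unfolding P_def sdp_point_def by (intro psd_blk_imp_psd_Schur) auto
  moreover have "psd (Agam A0 A g)" using g by (simp add: Gam_def)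
  ultimately have "lagr bb g x \<le> lagr bb g x + frob (Agam A0 A g) P"
    using frob_psd_nonneg by simp
  also have "\<dots> = frob (blk c0 bb A0) (blk 1 x X) + (\<Sum>i\<in>UNIV. g $ i * frob (blk (c i) (b i) (A i)) (blk 1 x X))"
  proof -
    have blk: "frob (blk \<kappa> \<beta> M) (blk 1 x X) = qf M \<beta> \<kappa> x + frob M P" for \<kappa> \<beta> M
      by (simp add: frob_blk P_def frob_diff_right frob_outer qf_def)
    show ?thesis
      by (simp add: blk lagr_def Agam_eq Alin_def frob_add_left frob_sum_left inner_vec_def qvals_def
          sum.distrib algebra_simps)
  qed
  also have "\<dots> \<le> frob (blk c0 bb A0) (blk 1 x X)"
  proof -
    have "g $ i * frob (blk (c i) (b i) (A i)) (blk 1 x X) \<le> 0" for i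
      using g Y by (cases "i \<in> I") (auto simp: Gam_def sdp_point_def mult_nonneg_nonpos)
    then show ?thesis by (simp add: sum_nonpos)
  qed
  finally show ?thesis .
qed

text \<open>At a maximiser \<open>\<gamma>\<close> of \<open>L(\<cdot>, x)\<close> over \<open>\<Gamma>\<close> with \<open>A(\<gamma>) \<succ> 0\<close> every coordinate direction can be
  followed a little in both senses (or, at an active sign constraint, in the positive sense only).\<close>
lemma pd_maximizer_coordinate:
  assumes gb: "gb \<in> Gam A0 A I" "pd (Agam A0 A gb)"
    and max: "\<And>g. g \<in> Gam A0 A I \<Longrightarrow> lagr bb g x \<le> lagr bb gb x"
  shows "qvals A b c x $ i \<le> 0" "i \<notin> I \<or> 0 < gb $ i \<Longrightarrow> 0 \<le> qvals A b c x $ i"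
proof -
  obtain e where e: "e > 0" "\<And>s. \<bar>s\<bar> < e \<Longrightarrow> pd (Agam A0 A gb + s *\<^sub>R A i)"
    using pd_add_small[OF gb(2) sym_A[of i]] by blast
  have step: "s * qvals A b c x $ i \<le> 0" if "\<bar>s\<bar> < e" "i \<in> I \<longrightarrow> 0 \<le> gb $ i + s" for s
  proof -
    have "Agam A0 A (gb + s *\<^sub>R axis i 1) = Agam A0 A gb + s *\<^sub>R A i"
      by (simp add: Agam_eq Alin_add Alin_scaleR Alin_axis add.assoc)
    then have "gb + s *\<^sub>R axis i 1 \<in> Gam A0 A I"
      using e(2)[OF that(1)] gb(1) that(2) by (auto simp: Gam_def axis_def pd_imp_psd)
    then show ?thesis using max[of "gb + s *\<^sub>R axis i 1"]
      by (simp add: lagr_add_ray inner_axis inner_commute[of "axis i 1"])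
  qed
  have "(e/2) * qvals A b c x $ i \<le> 0" using e(1) gb(1) by (intro step) (auto simp: Gam_def)
  then show "qvals A b c x $ i \<le> 0" using e(1) by (simp add: mult_le_0_iff)
  assume "i \<notin> I \<or> 0 < gb $ i"
  define s where "s = - (if i \<in> I then min (e/2) (gb $ i) else e/2)"
  have "s < 0" "\<bar>s\<bar> < e" "i \<in> I \<longrightarrow> 0 \<le> gb $ i + s"
    using \<open>i \<notin> I \<or> 0 < gb $ i\<close> e(1) by (auto simp: s_def)
  then have "s < 0" "s * qvals A b c x $ i \<le> 0" by (auto intro: step)
  then show "0 \<le> qvals A b c x $ i" by (simp add: mult_le_0_iff)
qed

lemma pd_maximizer_complementary:
  assumes gb: "gb \<in> Gam A0 A I" "pd (Agam A0 A gb)"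
    and max: "\<And>g. g \<in> Gam A0 A I \<Longrightarrow> lagr bb g x \<le> lagr bb gb x"
  shows "x \<in> qcqp_feas I A b c" "lagr bb gb x = qf A0 bb c0 x"
proof -
  note coord = pd_maximizer_coordinate[OF assms]
  show "x \<in> qcqp_feas I A b c"
    using coord by (force simp: qcqp_feas_def qvals_def intro: order_antisym)
  have "gb $ i * qvals A b c x $ i = 0" for i
    using coord[of i] gb(1) by (cases "i \<in> I") (auto simp: Gam_def order_le_less)
  then have "gb \<bullet> qvals A b c x = 0" unfolding inner_vec_def by (intro sum.neutral) auto
  then show "lagr bb gb x = qf A0 bb c0 x" by (simp add: lagr_def)
qed

end

section \<open>Minimising the dual envelope\<close>

lemma subspace_Vsp: "subspace (Vsp A0 A F)"
  unfolding subspace_def Vsp_def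
  by (auto simp: matrix_vector_right_distrib matrix_vector_mult_scaleR)

lemma continuous_on_Max_finite:
  fixes f :: "'t \<Rightarrow> 'a::topological_space \<Rightarrow> real"
  assumes "finite T" "T \<noteq> {}" "\<And>t. t \<in> T \<Longrightarrow> continuous_on S (f t)"
  shows "continuous_on S (\<lambda>x. Max ((\<lambda>t. f t x) ` T))"
  using assms
proof (induction T rule: finite_ne_induct)
  case (insert t T)
  then have "continuous_on S (\<lambda>x. max (f t x) (Max ((\<lambda>t. f t x) ` T)))"
    by (intro continuous_on_max) auto
  then show ?case using insert by (simp add: Max_insert)
qed simp

lemma eventually_less_along_ray:
  fixes f :: "'a::real_normed_vector \<Rightarrow> real"
  assumes "continuous_on UNIV f" "f x < K"
  shows "eventually (\<lambda>\<tau>. f (x + \<tau> *\<^sub>R w) < K) (at_right 0)"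
proof -
  have "((\<lambda>\<tau>. x + \<tau> *\<^sub>R w) \<longlongrightarrow> x) (at_right (0::real))"
    by (auto intro!: tendsto_eq_intros)
  moreover have "isCont f x" using assms(1) by (simp add: continuous_on_eq_continuous_at)
  ultimately have "((\<lambda>\<tau>. f (x + \<tau> *\<^sub>R w)) \<longlongrightarrow> f x) (at_right 0)"
    by (rule isCont_tendsto_compose[rotated])
  then show ?thesis using order_tendstoD(2) assms(2) by blast
qed

locale qcqp_generated = qcqp_slater A0 A b c c0 I gs
  for A0 :: "real^'n^'n" and A :: "'m::finite \<Rightarrow> real^'n^'n" and b :: "'m \<Rightarrow> real^'n"
    and c :: "'m \<Rightarrow> real" and c0 :: real and I :: "'m set" and gs :: "real^'m" +
  fixes T U :: "(real^'m) set"
  assumes finite_T: "finite T" and T_ne: "T \<noteq> {}" and finite_U: "finite U"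
    and T_sub_Gam: "T \<subseteq> Gam A0 A I"
    and recession: "\<And>u g s. u \<in> U \<Longrightarrow> g \<in> Gam A0 A I \<Longrightarrow> 0 \<le> s \<Longrightarrow> g + s *\<^sub>R u \<in> Gam A0 A I"
    and decomposition: "\<And>g. g \<in> Gam A0 A I \<Longrightarrow> \<exists>l m. (\<forall>t\<in>T. 0 \<le> l t) \<and> sum l T = 1 \<and>
        (\<forall>u\<in>U. 0 \<le> m u) \<and> g = (\<Sum>t\<in>T. l t *\<^sub>R t) + (\<Sum>u\<in>U. m u *\<^sub>R u)"
begin

text \<open>\<open>lagr_max bb\<close> is the supremum of the Lagrangian over \<open>\<Gamma>\<close>, which is finite exactly on \<open>Dom\<close>.\<close>
definition lagr_max :: "real^'n \<Rightarrow> real^'n \<Rightarrow> real" where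
  "lagr_max bb x = Max ((\<lambda>t. lagr bb t x) ` T)"

definition Dom :: "(real^'n) set" where
  "Dom = {x. \<forall>u\<in>U. u \<bullet> qvals A b c x \<le> 0}"

definition argmax_face :: "real^'n \<Rightarrow> real^'n \<Rightarrow> (real^'m) set" where
  "argmax_face bb x = {g \<in> Gam A0 A I. lagr bb g x = lagr_max bb x}"

lemma lagr_le_lagr_max_generator: "t \<in> T \<Longrightarrow> lagr bb t x \<le> lagr_max bb x"
  unfolding lagr_max_def using finite_T by (intro Max_ge) auto

lemma lagr_max_attained: obtains t where "t \<in> T" "lagr bb t x = lagr_max bb x"
proof -
  have "lagr_max bb x \<in> (\<lambda>t. lagr bb t x) ` T"
    unfolding lagr_max_def using finite_T T_ne by (intro Max_in) auto
  then show ?thesis using that by force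
qed

lemma lagr_le_lagr_max:
  assumes g: "g \<in> Gam A0 A I" and x: "x \<in> Dom"
  shows "lagr bb g x \<le> lagr_max bb x"
proof -
  obtain l m where lm: "\<forall>t\<in>T. 0 \<le> l t" "sum l T = 1" "\<forall>u\<in>U. 0 \<le> m u"
    "g = (\<Sum>t\<in>T. l t *\<^sub>R t) + (\<Sum>u\<in>U. m u *\<^sub>R u)"
    using decomposition[OF g] by blast
  define q where "q = qvals A b c x"
  have "(\<Sum>u\<in>U. m u * (u \<bullet> q)) \<le> 0"
    using lm(3) x by (auto simp: q_def Dom_def intro!: sum_nonpos mult_nonneg_nonpos)
  then have "lagr bb g x \<le> qf A0 bb c0 x + (\<Sum>t\<in>T. l t * (t \<bullet> q))"
    by (simp add: lagr_def q_def lm(4) inner_add_left inner_sum_left)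
  also have "\<dots> = (\<Sum>t\<in>T. l t * lagr bb t x)"
    by (simp add: lagr_def q_def distrib_left sum.distrib flip: sum_distrib_right lm(2))
  also have "\<dots> \<le> (\<Sum>t\<in>T. l t * lagr_max bb x)"
    using lm(1) by (intro sum_mono mult_left_mono lagr_le_lagr_max_generator) auto
  also have "\<dots> = lagr_max bb x" by (simp flip: sum_distrib_right add: lm(2))
  finally show ?thesis .
qed

lemma Dom_and_lagr_max_le:
  assumes "\<And>g. g \<in> Gam A0 A I \<Longrightarrow> lagr bb g x \<le> K"
  shows "x \<in> Dom" "lagr_max bb x \<le> K"
proof -
  show "x \<in> Dom" unfolding Dom_def
  proof (intro CollectI ballI)
    fix u assume u: "u \<in> U"
    have "lagr bb gs x + s * (u \<bullet> qvals A b c x) \<le> K" if "0 \<le> s" for s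
      using assms[OF recession[OF u gs_in_Gam that]] by (simp add: lagr_add_ray)
    then show "u \<bullet> qvals A b c x \<le> 0" by (rule nonpos_of_bounded_ray)
  qed
  obtain t where "t \<in> T" "lagr bb t x = lagr_max bb x" by (rule lagr_max_attained)
  then show "lagr_max bb x \<le> K" using assms T_sub_Gam by force
qed

lemma continuous_on_lagr_max: "continuous_on S (lagr_max bb)"
  unfolding lagr_max_def[abs_def] using finite_T T_ne
  by (intro continuous_on_Max_finite continuous_on_lagr)

lemma closed_Dom: "closed Dom"
proof -
  have "continuous_on UNIV (\<lambda>x. u \<bullet> qvals A b c x)" for u
    unfolding qf_lin[symmetric] by (rule continuous_on_qf)
  then have "closed {x. u \<bullet> qvals A b c x \<le> 0}" for u
    by (intro closed_Collect_le continuous_on_const)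
  moreover have "Dom = (\<Inter>u\<in>U. {x. u \<bullet> qvals A b c x \<le> 0})" by (auto simp: Dom_def)
  ultimately show ?thesis by (auto intro!: closed_INT)
qed

text \<open>Coercivity of \<open>L(\<gamma>\<^sup>*, \<cdot>) \<le> lagr_max\<close> makes the sublevel sets of \<open>lagr_max\<close> on \<open>Dom\<close> compact.\<close>
lemma lagr_max_attains_min:
  assumes x0: "x0 \<in> Dom"
  obtains xh where "xh \<in> Dom" "\<And>y. y \<in> Dom \<Longrightarrow> lagr_max bb xh \<le> lagr_max bb y"
proof -
  obtain R where R: "\<And>\<beta> x. norm \<beta> \<le> norm (bgam bb b gs) \<Longrightarrow>
      qf (Agam A0 A gs) \<beta> (c0 + clin c gs) x \<le> lagr_max bb x0 \<Longrightarrow> norm x \<le> R"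
    using qf_sublevel_bounded[OF pd_gs] by blast
  define K where "K = Dom \<inter> {x. lagr_max bb x \<le> lagr_max bb x0}"
  have "closed K"
    unfolding K_def using closed_Dom continuous_on_lagr_max
    by (intro closed_Int closed_Collect_le continuous_on_const) auto
  moreover have "bounded K"
    unfolding bounded_iff
  proof (intro exI ballI)
    fix x assume "x \<in> K"
    then have "qf (Agam A0 A gs) (bgam bb b gs) (c0 + clin c gs) x \<le> lagr_max bb x0"
      using lagr_le_lagr_max[OF gs_in_Gam, of x bb] by (auto simp: K_def lagr_eq_qf)
    then show "norm x \<le> R" using R by blast
  qed
  ultimately have "compact K" by (simp add: compact_eq_bounded_closed)
  moreover have "K \<noteq> {}" using x0 by (auto simp: K_def)
  ultimately obtain xh where "xh \<in> K" "\<forall>y\<in>K. lagr_max bb xh \<le> lagr_max bb y"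
    using continuous_attains_inf[OF _ _ continuous_on_lagr_max] by blast
  then show ?thesis
    using that[of xh] by (fastforce simp: K_def)
qed

lemma argmax_face_face_of:
  assumes "x \<in> Dom"
  shows "argmax_face bb x face_of Gam A0 A I"
proof -
  have "argmax_face bb x = Gam A0 A I \<inter> {g. qvals A b c x \<bullet> g = lagr_max bb x - qf A0 bb c0 x}"
    by (auto simp: argmax_face_def lagr_def inner_commute)
  also have "\<dots> face_of Gam A0 A I"
  proof (intro face_of_Int_supporting_hyperplane_le convex_Gam)
    fix g assume "g \<in> Gam A0 A I"
    from lagr_le_lagr_max[OF this assms, of bb]
    show "qvals A b c x \<bullet> g \<le> lagr_max bb x - qf A0 bb c0 x"
      unfolding lagr_def inner_commute[of g] by linarith
  qed
  finally show ?thesis .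
qed

lemma argmax_face_recession:
  assumes "g \<in> argmax_face bb x" "u \<in> U" "u \<bullet> qvals A b c x = 0" "0 \<le> s"
  shows "g + s *\<^sub>R u \<in> argmax_face bb x"
  using assms recession by (auto simp: argmax_face_def lagr_add_ray)

lemma eventually_in_Dom_along:
  assumes x: "x \<in> Dom"
    and U_dir: "\<And>u. u \<in> U \<Longrightarrow> u \<bullet> qvals A b c x = 0 \<Longrightarrow> Alin A u *v w = 0 \<and> w \<bullet> blin b u \<le> 0"
  shows "eventually (\<lambda>\<tau>. x + \<tau> *\<^sub>R w \<in> Dom) (at_right 0)"
proof -
  have "eventually (\<lambda>\<tau>. u \<bullet> qvals A b c (x + \<tau> *\<^sub>R w) \<le> 0) (at_right 0)" if u: "u \<in> U" for u
  proof (cases "u \<bullet> qvals A b c x = 0")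
    case True
    then have "u \<bullet> qvals A b c (x + \<tau> *\<^sub>R w) = 2 * \<tau> * (w \<bullet> blin b u)" for \<tau>
      using qf_shift_kernel[OF sym_mat_Alin, of A u w "blin b u" "clin c u" x \<tau>] sym_A U_dir[OF u True]
      by (simp add: qf_lin)
    then show ?thesis
      using U_dir[OF u True] by (auto intro!: eventually_mono[OF eventually_at_right_less] mult_nonneg_nonpos)
  next
    case False
    then have neg: "u \<bullet> qvals A b c x < 0" using x u by (auto simp: Dom_def order_less_le)
    have "continuous_on UNIV (\<lambda>x. u \<bullet> qvals A b c x)"
      unfolding qf_lin[symmetric] by (rule continuous_on_qf)
    from eventually_less_along_ray[OF this neg, of w] show ?thesis
      by (rule eventually_mono) simp
  qed
  then show ?thesis
    by (auto simp: Dom_def intro: eventually_ball_finite[OF finite_U])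
qed

lemma eventually_lagr_max_less_along:
  assumes T_dir: "\<And>t. t \<in> T \<Longrightarrow> lagr bb t x = lagr_max bb x \<Longrightarrow>
      Agam A0 A t *v w = 0 \<and> w \<bullet> bgam bb b t < 0"
  shows "eventually (\<lambda>\<tau>. lagr_max bb (x + \<tau> *\<^sub>R w) < lagr_max bb x) (at_right 0)"
proof -
  have "eventually (\<lambda>\<tau>. lagr bb t (x + \<tau> *\<^sub>R w) < lagr_max bb x) (at_right 0)" if t: "t \<in> T" for t
  proof (cases "lagr bb t x = lagr_max bb x")
    case True
    then have "lagr bb t (x + \<tau> *\<^sub>R w) = lagr_max bb x + 2 * \<tau> * (w \<bullet> bgam bb b t)" for \<tau>
      using qf_shift_kernel[OF sym_mat_Agam, of A0 A t w "bgam bb b t" "c0 + clin c t" x \<tau>] sym_A0 sym_A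
        T_dir[OF t True]
      by (simp add: lagr_eq_qf)
    then show ?thesis
      using T_dir[OF t True] by (auto intro!: eventually_mono[OF eventually_at_right_less] mult_pos_neg)
  next
    case False
    then have "lagr bb t x < lagr_max bb x" using lagr_le_lagr_max_generator[OF t] by (simp add: order_less_le)
    then show ?thesis by (intro eventually_less_along_ray continuous_on_lagr)
  qed
  then have "eventually (\<lambda>\<tau>. \<forall>t\<in>T. lagr bb t (x + \<tau> *\<^sub>R w) < lagr_max bb x) (at_right 0)"
    by (intro eventually_ball_finite finite_T) auto
  then show ?thesis
  proof (rule eventually_mono)
    fix \<tau> assume "\<forall>t\<in>T. lagr bb t (x + \<tau> *\<^sub>R w) < lagr_max bb x"
    moreover obtain t where "t \<in> T" "lagr bb t (x + \<tau> *\<^sub>R w) = lagr_max bb (x + \<tau> *\<^sub>R w)"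
      by (rule lagr_max_attained)
    ultimately show "lagr_max bb (x + \<tau> *\<^sub>R w) < lagr_max bb x" by force
  qed
qed

lemma lagr_max_descent:
  assumes "x \<in> Dom"
    and "\<And>t. t \<in> T \<Longrightarrow> lagr bb t x = lagr_max bb x \<Longrightarrow>
        Agam A0 A t *v w = 0 \<and> w \<bullet> bgam bb b t < 0"
    and "\<And>u. u \<in> U \<Longrightarrow> u \<bullet> qvals A b c x = 0 \<Longrightarrow> Alin A u *v w = 0 \<and> w \<bullet> blin b u \<le> 0"
  obtains y where "y \<in> Dom" "lagr_max bb y < lagr_max bb x"
proof -
  have "eventually (\<lambda>\<tau>. x + \<tau> *\<^sub>R w \<in> Dom \<and> lagr_max bb (x + \<tau> *\<^sub>R w) < lagr_max bb x) (at_right 0)"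
    using assms by (intro eventually_conj eventually_in_Dom_along eventually_lagr_max_less_along)
  then show ?thesis
    using that eventually_happens'[OF trivial_limit_at_right_real] by blast
qed


lemma active_hull_sums_subset_argmax_face:
  assumes "x \<in> Dom"
  shows "(\<Union>p\<in>convex hull {t\<in>T. lagr bb t x = lagr_max bb x}.
      \<Union>q\<in>convex_cone hull {u\<in>U. u \<bullet> qvals A b c x = 0}. {p + q}) \<subseteq> argmax_face bb x"
  using face_of_imp_convex[OF argmax_face_face_of[OF assms]] T_sub_Gam argmax_face_recession
  by (intro hull_sums_subset_of_recession) (auto simp: argmax_face_def)

lemma argmax_face_separation:
  assumes x: "x \<in> Dom" and V: "subspace V"
    and sep: "0 \<notin> proj V ` bgam bb b ` argmax_face bb x"
  obtains a where "\<And>t. t \<in> T \<Longrightarrow> lagr bb t x = lagr_max bb x \<Longrightarrow> 0 < a \<bullet> proj V (bgam bb b t)"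
    "\<And>u. u \<in> U \<Longrightarrow> u \<bullet> qvals A b c x = 0 \<Longrightarrow> 0 \<le> a \<bullet> proj V (blin b u)"
proof -
  define TF where "TF = {t\<in>T. lagr bb t x = lagr_max bb x}"
  define UF where "UF = {u\<in>U. u \<bullet> qvals A b c x = 0}"
  define L where "L = proj V \<circ> blin b"
  have L: "linear L" unfolding L_def by (rule linear_compose[OF linear_blin linear_proj[OF V]])
  have proj_bgam: "proj V (bgam bb b g) = proj V bb + L g" for g
    by (simp add: L_def bgam_eq linear_add[OF linear_proj[OF V]])
  have "(\<lambda>g. proj V bb + L g) ` S = (\<lambda>z. proj V bb + z) ` (L ` S)" for S by (simp add: image_image)
  then have hull_TF: "convex hull ((\<lambda>g. proj V bb + L g) ` TF) = (\<lambda>g. proj V bb + L g) ` (convex hull TF)"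
    by (simp only: convex_hull_translation convex_hull_linear_image[OF L])
  have "0 \<notin> (\<Union>p\<in>convex hull ((\<lambda>g. proj V bb + L g) ` TF). \<Union>q\<in>convex_cone hull (L ` UF). {p + q})"
  proof
    assume "0 \<in> (\<Union>p\<in>convex hull ((\<lambda>g. proj V bb + L g) ` TF). \<Union>q\<in>convex_cone hull (L ` UF). {p + q})"
    then obtain p q where "p \<in> convex hull TF" "q \<in> convex_cone hull UF" "proj V bb + L p + L q = 0"
      unfolding hull_TF convex_cone_hull_linear_image[OF L] by auto
    then have "p + q \<in> argmax_face bb x" "proj V (bgam bb b (p + q)) = 0"
      using active_hull_sums_subset_argmax_face[OF x, of bb]
      by (auto simp: TF_def UF_def proj_bgam linear_add[OF L] add.assoc)
    then show False using sep by (metis image_eqI)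
  qed
  moreover have "finite ((\<lambda>g. proj V bb + L g) ` TF)" "finite (L ` UF)"
    using finite_T finite_U by (simp_all add: TF_def UF_def)
  ultimately obtain a where pos: "\<And>p. p \<in> (\<lambda>g. proj V bb + L g) ` TF \<Longrightarrow> 0 < a \<bullet> p"
    and nonneg: "\<And>q. q \<in> L ` UF \<Longrightarrow> 0 \<le> a \<bullet> q"
    using finite_hull_sums_separation by blast
  show ?thesis
  proof (rule that)
    show "0 < a \<bullet> proj V (bgam bb b t)" if "t \<in> T" "lagr bb t x = lagr_max bb x" for t
      using that pos[of "proj V bb + L t"] by (simp add: TF_def proj_bgam)
    show "0 \<le> a \<bullet> proj V (blin b u)" if "u \<in> U" "u \<bullet> qvals A b c x = 0" for u
      using that nonneg[of "L u"] by (simp add: UF_def L_def)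
  qed
qed

text \<open>The direction is minus the projection onto \<open>\<V>(\<F>)\<close> of a functional separating \<open>0\<close> from
  \<open>Proj\<^sub>\<V>\<^sub>(\<^sub>\<F>\<^sub>) b(\<F>)\<close>; the active directions \<open>u\<close> also annihilate it because \<open>\<gamma> + u \<in> \<F>\<close> for \<open>\<gamma> \<in> \<F>\<close>.\<close>
lemma argmax_face_descent_direction:
  assumes x: "x \<in> Dom"
    and sep: "0 \<notin> proj (Vsp A0 A (argmax_face bb x)) ` bgam bb b ` argmax_face bb x"
  obtains w where
    "\<And>t. t \<in> T \<Longrightarrow> lagr bb t x = lagr_max bb x \<Longrightarrow> Agam A0 A t *v w = 0 \<and> w \<bullet> bgam bb b t < 0"
    "\<And>u. u \<in> U \<Longrightarrow> u \<bullet> qvals A b c x = 0 \<Longrightarrow> Alin A u *v w = 0 \<and> w \<bullet> blin b u \<le> 0"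
proof -
  define F where "F = argmax_face bb x"
  define V where "V = Vsp A0 A F"
  have V: "subspace V" by (simp add: V_def subspace_Vsp)
  have "0 \<notin> proj V ` bgam bb b ` argmax_face bb x" using sep by (simp add: V_def F_def)
  then obtain a where pos: "\<And>t. t \<in> T \<Longrightarrow> lagr bb t x = lagr_max bb x \<Longrightarrow> 0 < a \<bullet> proj V (bgam bb b t)"
    and nonneg: "\<And>u. u \<in> U \<Longrightarrow> u \<bullet> qvals A b c x = 0 \<Longrightarrow> 0 \<le> a \<bullet> proj V (blin b u)"
    using argmax_face_separation[OF x V] by blast
  define w where "w = - proj V a"
  have "w \<in> V" using proj_in_and_orthogonal(1)[OF V] V by (simp add: w_def subspace_neg)
  then have kernel: "Agam A0 A g *v w = 0" if "g \<in> F" for g using that by (simp add: V_def Vsp_def)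
  have inner_w: "w \<bullet> y = - (a \<bullet> proj V y)" for y by (simp add: w_def proj_inner_commute[OF V])
  obtain t0 where "t0 \<in> T" "lagr bb t0 x = lagr_max bb x" by (rule lagr_max_attained)
  then have t0F: "t0 \<in> F" using T_sub_Gam by (auto simp: F_def argmax_face_def)
  show ?thesis
  proof (rule that)
    fix t assume "t \<in> T" "lagr bb t x = lagr_max bb x"
    then show "Agam A0 A t *v w = 0 \<and> w \<bullet> bgam bb b t < 0"
      using kernel T_sub_Gam pos by (auto simp: inner_w F_def argmax_face_def)
  next
    fix u assume u: "u \<in> U" "u \<bullet> qvals A b c x = 0"
    have "Agam A0 A (t0 + 1 *\<^sub>R u) = Agam A0 A t0 + Alin A u" by (simp add: Agam_eq Alin_add add.assoc)
    moreover have "t0 + 1 *\<^sub>R u \<in> F"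
      using argmax_face_recession[OF t0F[unfolded F_def] u zero_le_one] by (simp only: F_def)
    ultimately have "Alin A u *v w = 0"
      using kernel[OF t0F] kernel[of "t0 + 1 *\<^sub>R u"] by (simp add: matrix_vector_mult_add_rdistrib)
    moreover have "w \<bullet> blin b u \<le> 0" using nonneg[OF u] by (simp add: inner_w)
    ultimately show "Alin A u *v w = 0 \<and> w \<bullet> blin b u \<le> 0" ..
  qed
qed

text \<open>A minimiser of \<open>lagr_max\<close> over \<open>Dom\<close> cannot have a semidefinite argmax face, by the descent
  lemma; so a maximising \<open>\<gamma>\<close> with \<open>A(\<gamma>) \<succ> 0\<close> exists and certifies feasibility and optimality.\<close>
lemma minimizer_below_relaxation:
  assumes sep: "\<And>F. semidef_face A0 A I F \<Longrightarrow> 0 \<notin> proj (Vsp A0 A F) ` bgam bb b ` F"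
    and x0: "x0 \<in> qcqp_feas I A b c"
  obtains xh where "xh \<in> qcqp_feas I A b c"
    "\<And>x X. sdp_point I A b c x X \<Longrightarrow> qf A0 bb c0 xh \<le> frob (blk c0 bb A0) (blk 1 x X)"
    "lagr bb gs xh \<le> qf A0 bb c0 x0"
proof -
  have x0D: "x0 \<in> Dom" "lagr_max bb x0 \<le> qf A0 bb c0 x0"
    using Dom_and_lagr_max_le lagr_le_qf_if_feasible[OF x0] by blast+
  obtain xh where xh: "xh \<in> Dom" and min: "\<And>y. y \<in> Dom \<Longrightarrow> lagr_max bb xh \<le> lagr_max bb y"
    using lagr_max_attains_min[OF x0D(1)] by blast
  define F where "F = argmax_face bb xh"
  have "\<not> semidef_face A0 A I F"
  proof
    assume "semidef_face A0 A I F"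
    from argmax_face_descent_direction[OF xh sep[OF this, unfolded F_def]]
    obtain w where "\<And>t. t \<in> T \<Longrightarrow> lagr bb t xh = lagr_max bb xh \<Longrightarrow>
        Agam A0 A t *v w = 0 \<and> w \<bullet> bgam bb b t < 0"
      "\<And>u. u \<in> U \<Longrightarrow> u \<bullet> qvals A b c xh = 0 \<Longrightarrow> Alin A u *v w = 0 \<and> w \<bullet> blin b u \<le> 0"
      by blast
    then obtain y where "y \<in> Dom" "lagr_max bb y < lagr_max bb xh"
      using lagr_max_descent[OF xh] by blast
    with min show False by (simp add: not_le[symmetric])
  qed
  moreover have "F face_of Gam A0 A I" unfolding F_def by (rule argmax_face_face_of[OF xh])
  moreover obtain t where "t \<in> T" "lagr bb t xh = lagr_max bb xh" by (rule lagr_max_attained)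
  then have "F \<noteq> {}" using T_sub_Gam by (auto simp: F_def argmax_face_def)
  ultimately obtain gb where gb: "gb \<in> F" "pd (Agam A0 A gb)" by (auto simp: semidef_face_def)
  then have "gb \<in> Gam A0 A I" "\<And>g. g \<in> Gam A0 A I \<Longrightarrow> lagr bb g xh \<le> lagr bb gb xh"
    using lagr_le_lagr_max[OF _ xh] by (auto simp: F_def argmax_face_def)
  note compl = pd_maximizer_complementary[OF this(1) gb(2) this(2)]
  have qf_eq: "qf A0 bb c0 xh = lagr_max bb xh" using compl(2) gb(1) by (simp add: F_def argmax_face_def)
  show ?thesis
  proof (rule that[OF compl(1)])
    fix x X assume "sdp_point I A b c x X"
    then have "x \<in> Dom" "lagr_max bb x \<le> frob (blk c0 bb A0) (blk 1 x X)"
      using Dom_and_lagr_max_le lagr_le_sdp by blast+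
    then show "qf A0 bb c0 xh \<le> frob (blk c0 bb A0) (blk 1 x X)" using min qf_eq by fastforce
  next
    show "lagr bb gs xh \<le> qf A0 bb c0 x0"
      using lagr_le_lagr_max[OF gs_in_Gam xh, of bb] min[OF x0D(1)] x0D(2) by linarith
  qed
qed

end

context qcqp_slater
begin

lemma feasible_below_relaxation:
  assumes "\<And>F. semidef_face A0 A I F \<Longrightarrow> 0 \<notin> proj (Vsp A0 A F) ` bgam bb b ` F"
    and "x0 \<in> qcqp_feas I A b c"
  obtains xh where "xh \<in> qcqp_feas I A b c"
    "\<And>x X. sdp_point I A b c x X \<Longrightarrow> qf A0 bb c0 xh \<le> frob (blk c0 bb A0) (blk 1 x X)"
    "lagr bb gs xh \<le> qf A0 bb c0 x0"
proof -
  have ne: "Gam A0 A I \<noteq> {}" using gs_in_Gam by blast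
  obtain T U where TU: "finite T" "T \<noteq> {}" "finite U" "T \<subseteq> Gam A0 A I"
    "\<And>u g s. u \<in> U \<Longrightarrow> g \<in> Gam A0 A I \<Longrightarrow> 0 \<le> s \<Longrightarrow> g + s *\<^sub>R u \<in> Gam A0 A I"
    "\<And>g. g \<in> Gam A0 A I \<Longrightarrow> \<exists>l m. (\<forall>t\<in>T. 0 \<le> l t) \<and> sum l T = 1 \<and> (\<forall>u\<in>U. 0 \<le> m u) \<and>
        g = (\<Sum>t\<in>T. l t *\<^sub>R t) + (\<Sum>u\<in>U. m u *\<^sub>R u)"
    using polyhedron_Minkowski_Weyl[OF polyhedron_Gam ne] by blast
  interpret qcqp_generated A0 A b c c0 I gs T U
    by (rule qcqp_generated.intro[OF qcqp_slater_axioms qcqp_generated_axioms.intro]) (fact TU)+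
  show ?thesis using minimizer_below_relaxation[OF assms] that by blast
qed

lemma lagr_sublevel_bounded:
  obtains R where "\<And>h x. norm h \<le> H \<Longrightarrow> lagr (b0 + h) gs x \<le> qf A0 (b0 + h) c0 x0 \<Longrightarrow> norm x \<le> R"
proof -
  define C where "C = qf A0 b0 c0 x0 + 2 * (H * norm x0)"
  obtain R where R: "\<And>\<beta> x. norm \<beta> \<le> norm (bgam b0 b gs) + H \<Longrightarrow>
      qf (Agam A0 A gs) \<beta> (c0 + clin c gs) x \<le> C \<Longrightarrow> norm x \<le> R"
    using qf_sublevel_bounded[OF pd_gs] by blast
  have "norm x \<le> R" if h: "norm h \<le> H" and x: "lagr (b0 + h) gs x \<le> qf A0 (b0 + h) c0 x0" for h x
  proof (rule R)
    show "norm (bgam (b0 + h) b gs) \<le> norm (bgam b0 b gs) + H"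
      using norm_triangle_ineq[of "bgam b0 b gs" h] h by (simp add: bgam_add_const)
    have "h \<bullet> x0 \<le> H * norm x0"
      using Cauchy_Schwarz_ineq2[of h x0] h by (metis abs_le_D1 mult_right_mono norm_ge_zero order_trans)
    then show "qf (Agam A0 A gs) (bgam (b0 + h) b gs) (c0 + clin c gs) x \<le> C"
      using x by (simp add: lagr_eq_qf qf_add_linear C_def)
  qed
  then show ?thesis using that by blast
qed

end

section \<open>Exactness of the relaxation\<close>

lemma Opt_SDP_le_Opt: "Opt_SDP A0 b0 c0 I A b c \<le> Opt A0 b0 c0 I A b c"
  unfolding Opt_def
proof (rule INF_greatest)
  fix x assume "x \<in> qcqp_feas I A b c"
  then have "sdp_point I A b c x (outer x x)"
    by (auto simp: sdp_point_def qcqp_feas_def frob_blk_outer psd_blk_outer sym_mat_outer)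
  then have "Opt_SDP A0 b0 c0 I A b c \<le> ereal (frob (blk c0 b0 A0) (blk 1 x (outer x x)))"
    unfolding Opt_SDP_def sdp_feas_eq by (auto intro: INF_lower)
  then show "Opt_SDP A0 b0 c0 I A b c \<le> ereal (qf A0 b0 c0 x)" by (simp add: frob_blk_outer)
qed

lemma Opt_le_Opt_SDP_if_perturbed:
  assumes h: "h \<longlonglongrightarrow> 0" and bounded: "\<And>j. norm (xs j) \<le> R"
    and feasible: "\<And>j. xs j \<in> qcqp_feas I A b c"
    and below: "\<And>j x X. sdp_point I A b c x X \<Longrightarrow>
        qf A0 (b0 + h j) c0 (xs j) \<le> frob (blk c0 (b0 + h j) A0) (blk 1 x X)"
  shows "Opt A0 b0 c0 I A b c \<le> Opt_SDP A0 b0 c0 I A b c"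
  unfolding Opt_SDP_def sdp_feas_eq
proof (intro INF_greatest, clarify)
  fix x X assume Y: "sdp_point I A b c x X"
  define e where "e j = 2 * (h j \<bullet> (x - xs j))" for j
  have le: "Opt A0 b0 c0 I A b c \<le> ereal (frob (blk c0 b0 A0) (blk 1 x X) + e j)" for j
  proof -
    have "Opt A0 b0 c0 I A b c \<le> ereal (qf A0 b0 c0 (xs j))"
      unfolding Opt_def by (rule INF_lower[OF feasible])
    also have "qf A0 b0 c0 (xs j) \<le> frob (blk c0 b0 A0) (blk 1 x X) + e j"
      using below[OF Y, of j] by (simp add: qf_add_linear frob_blk e_def inner_diff_right inner_add_left)
    finally show ?thesis by simp
  qed
  have "e \<longlonglongrightarrow> 0"
  proof (rule Lim_null_comparison)
    show "\<forall>\<^sub>F j in sequentially. norm (e j) \<le> 2 * (norm (h j) * (norm x + R))"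
    proof (rule always_eventually, rule allI)
      fix j
      have "\<bar>h j \<bullet> (x - xs j)\<bar> \<le> norm (h j) * norm (x - xs j)" by (rule Cauchy_Schwarz_ineq2)
      also have "\<dots> \<le> norm (h j) * (norm x + R)"
        using norm_triangle_ineq4[of x "xs j"] bounded[of j] by (intro mult_left_mono) auto
      finally show "norm (e j) \<le> 2 * (norm (h j) * (norm x + R))" by (simp add: e_def)
    qed
    show "(\<lambda>j. 2 * (norm (h j) * (norm x + R))) \<longlonglongrightarrow> 0"
      using tendsto_norm_zero[OF h] by (auto intro!: tendsto_mult_right_zero tendsto_mult_left_zero)
  qed
  then have "(\<lambda>j. frob (blk c0 b0 A0) (blk 1 x X) + e j) \<longlonglongrightarrow> frob (blk c0 b0 A0) (blk 1 x X)"
    using tendsto_add[OF tendsto_const] by fastforce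
  then have "(\<lambda>j. ereal (frob (blk c0 b0 A0) (blk 1 x X) + e j)) \<longlonglongrightarrow> ereal (frob (blk c0 b0 A0) (blk 1 x X))"
    by (simp add: lim_ereal)
  then show "Opt A0 b0 c0 I A b c \<le> ereal (frob (blk c0 b0 A0) (blk 1 x X))"
    by (rule tendsto_lowerbound) (simp_all add: le)
qed

theorem mainTheorem18:
  fixes A0 :: "real^'n^'n" and b0 :: "real^'n" and c0 :: real
    and I :: "('m::finite) set"
    and A :: "'m \<Rightarrow> real^'n^'n" and b :: "'m \<Rightarrow> real^'n" and c :: "'m \<Rightarrow> real"
  assumes symA0: "sym_mat A0" and symA: "\<And>i. sym_mat (A i)"
    and assmA1: "qcqp_feas I A b c \<noteq> {}"
    and assmA2: "\<exists>g. (\<forall>i\<in>I. 0 \<le> g $ i) \<and> pd (Agam A0 A g)"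
    and assmC: "polyhedron (Gam A0 A I)"
    and hyp: "\<exists>h :: nat \<Rightarrow> real^'n. h \<longlonglongrightarrow> 0 \<and>
       (\<forall>F. semidef_face A0 A I F \<longrightarrow>
          (\<forall>j. (0::real^'n) \<notin> proj (Vsp A0 A F) ` {bgam b0 b g + h j | g. g \<in> F}))"
  shows "Opt A0 b0 c0 I A b c = Opt_SDP A0 b0 c0 I A b c"
proof -
  obtain gs where "\<forall>i\<in>I. 0 \<le> gs $ i" "pd (Agam A0 A gs)" using assmA2 by blast
  then interpret qcqp_slater A0 A b c c0 I gs using symA0 symA assmC by unfold_locales
  obtain h :: "nat \<Rightarrow> real^'n" where h: "h \<longlonglongrightarrow> 0"
    and sep: "\<And>F j. semidef_face A0 A I F \<Longrightarrow> 0 \<notin> proj (Vsp A0 A F) ` bgam (b0 + h j) b ` F"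
    using hyp by (auto simp: bgam_add_const setcompr_eq_image)
  obtain x0 where x0: "x0 \<in> qcqp_feas I A b c" using assmA1 by blast
  have "\<forall>j. \<exists>xh. xh \<in> qcqp_feas I A b c \<and>
      (\<forall>x X. sdp_point I A b c x X \<longrightarrow> qf A0 (b0 + h j) c0 xh \<le> frob (blk c0 (b0 + h j) A0) (blk 1 x X)) \<and>
      lagr (b0 + h j) gs xh \<le> qf A0 (b0 + h j) c0 x0"
    using feasible_below_relaxation[OF sep x0] by blast
  then obtain xs where xs: "\<And>j. xs j \<in> qcqp_feas I A b c"
    "\<And>j x X. sdp_point I A b c x X \<Longrightarrow> qf A0 (b0 + h j) c0 (xs j) \<le> frob (blk c0 (b0 + h j) A0) (blk 1 x X)"
    "\<And>j. lagr (b0 + h j) gs (xs j) \<le> qf A0 (b0 + h j) c0 x0"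
    by metis
  obtain H where "\<And>j. norm (h j) \<le> H"
    using convergent_imp_Bseq[OF convergentI[OF h]] by (rule BseqE) blast
  then obtain R where "\<And>j. norm (xs j) \<le> R" using lagr_sublevel_bounded[of H b0 x0] xs(3) by metis
  then have "Opt A0 b0 c0 I A b c \<le> Opt_SDP A0 b0 c0 I A b c"
    using Opt_le_Opt_SDP_if_perturbed[OF h] xs(1,2) by blast
  then show ?thesis using Opt_SDP_le_Opt by (rule antisym)
qed

end
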